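(* Let $k\ge 2$ and $j\ge 0$, $n\ge 0$ be integers, and consider the random $k$-tree process. Suppose that in $G(j)$ a vertex $x$ has $A>0$ neighbors and is contained in $B$ many $k$-cliques. Conditional on this, the degree of $x$ in $G(n+j)$ is distributed as $$A+\frac{1}{k-1}\left(\operatorname{Urn}\left(B,\,kj+1-B,\,\begin{bmatrix}k&0\\1&k-1\end{bmatrix},\,n\right)-B\right).$$
   Context: Random $k$-tree process: $G(0)$ is a clique on $k$ vertices; for $t\ge1$, $G(t)$ is obtained from $G(t-1)$ by choosing a $k$-clique of $G(t-1)$ uniformly at random, creating a new vertex, and joining it to all vertices of the chosen clique ($G(t)$ has $kt+1$ many $k$-cliques). Generalized Pólya–Eggenberger urn: for nonnegative integers $\alpha,\beta,\gamma,\delta$, start with $W_0$ white and $B_0$ black balls; in each step a ball is drawn uniformly at random and returned; if it is white, $\delta$ white and $\gamma$ black balls are added; if it is black, $\beta$ white and $\alpha$ black balls are added. $\operatorname{Urn}\left(W_0,B_0,\begin{bmatrix}\alpha&\beta\\\gamma&\delta\end{bmatrix},n\right)$ denotes the number of white balls right after $n$ draws. *)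

theory Defs
  imports "HOL-Probability.Probability"
begin

text \<open>A graph is a pair (V, E) of a vertex set of naturals and a set of
undirected edges, each edge being a 2-element set of vertices.\<close>
type_synonym graph = "nat set \<times> nat set set"

definition kcliques :: "nat \<Rightarrow> graph \<Rightarrow> nat set set" where
  "kcliques k G = {S. S \<subseteq> fst G \<and> card S = k \<and>
      (\<forall>u\<in>S. \<forall>v\<in>S. u \<noteq> v \<longrightarrow> {u, v} \<in> snd G)}"

definition neighbors :: "graph \<Rightarrow> nat \<Rightarrow> nat set" where
  "neighbors G x = {y. y \<in> fst G \<and> y \<noteq> x \<and> {x, y} \<in> snd G}"

definition degree :: "graph \<Rightarrow> nat \<Rightarrow> nat" where
  "degree G x = card (neighbors G x)"

definition nkcliques_at :: "nat \<Rightarrow> graph \<Rightarrow> nat \<Rightarrow> nat" where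
  "nkcliques_at k G x = card {S \<in> kcliques k G. x \<in> S}"

definition ktree_init :: "nat \<Rightarrow> graph" where
  "ktree_init k = ({0..<k}, {{u, v} | u v. u < k \<and> v < k \<and> u \<noteq> v})"

text \<open>One step: choose a k-clique uniformly at random, add a fresh vertex
(the vertex card V, which is not in V = {0..<card V}) joined to all vertices
of the chosen clique.\<close>
definition ktree_step :: "nat \<Rightarrow> graph \<Rightarrow> graph pmf" where
  "ktree_step k G = map_pmf
     (\<lambda>C. (insert (card (fst G)) (fst G), snd G \<union> {{card (fst G), u} | u. u \<in> C}))
     (pmf_of_set (kcliques k G))"

text \<open>Joint law of the trajectory [G(0), G(1), ..., G(t)].\<close>
fun ktree_traj :: "nat \<Rightarrow> nat \<Rightarrow> graph list pmf" where
  "ktree_traj k 0 = return_pmf [ktree_init k]"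
| "ktree_traj k (Suc t) =
     bind_pmf (ktree_traj k t) (\<lambda>gs. map_pmf (\<lambda>g. gs @ [g]) (ktree_step k (last gs)))"

text \<open>Generalized Polya-Eggenberger urn with replacement matrix
[[alpha, beta], [gamma, delta]]: a white draw adds delta white and gamma black,
a black draw adds beta white and alpha black.\<close>
definition urn_step :: "nat \<Rightarrow> nat \<Rightarrow> nat \<Rightarrow> nat \<Rightarrow> nat \<times> nat \<Rightarrow> (nat \<times> nat) pmf" where
  "urn_step \<alpha> \<beta> \<gamma> \<delta> s = (case s of (w, b) \<Rightarrow>
     if w + b = 0 then return_pmf (w, b)
     else map_pmf (\<lambda>white. if white then (w + \<delta>, b + \<gamma>) else (w + \<beta>, b + \<alpha>))
            (bernoulli_pmf (real w / real (w + b))))"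

fun urn_state :: "nat \<Rightarrow> nat \<Rightarrow> nat \<Rightarrow> nat \<Rightarrow> nat \<Rightarrow> nat \<Rightarrow> nat \<Rightarrow> (nat \<times> nat) pmf" where
  "urn_state W0 B0 \<alpha> \<beta> \<gamma> \<delta> 0 = return_pmf (W0, B0)"
| "urn_state W0 B0 \<alpha> \<beta> \<gamma> \<delta> (Suc n) =
     bind_pmf (urn_state W0 B0 \<alpha> \<beta> \<gamma> \<delta> n) (urn_step \<alpha> \<beta> \<gamma> \<delta>)"

definition Urn :: "nat \<Rightarrow> nat \<Rightarrow> nat \<Rightarrow> nat \<Rightarrow> nat \<Rightarrow> nat \<Rightarrow> nat \<Rightarrow> nat pmf" where
  "Urn W0 B0 \<alpha> \<beta> \<gamma> \<delta> n = map_pmf fst (urn_state W0 B0 \<alpha> \<beta> \<gamma> \<delta> n)"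

end

theory Submission
  imports Defs
begin

text \<open>Colour the k-cliques through x white and all others black. Adding a vertex on a white
  clique creates k - 1 white cliques and one black one, adding it on a black clique creates k
  black ones; since the clique is chosen uniformly, the numbers of white and black cliques evolve
  as the urn with replacement matrix [[k, 0], [1, k - 1]]. Each white draw also raises the degree
  of x by one, so (k - 1) (deg x - A) equals the number of white balls minus B at all times.
  Conditioning on G(j) leaves the future of the process a k-tree process started at G(j), whose
  urn starts with B white and kj + 1 - B black balls.\<close>

lemma inj_on_insert_Diff_singleton:
  assumes "v \<notin> C" shows "inj_on (\<lambda>u. insert v (C - {u})) C"
proof (rule inj_onI)
  fix a b assume "a \<in> C" "b \<in> C" "insert v (C - {a}) = insert v (C - {b})"
  then have "C - {a} = C - {b}" using assms by (metis Diff_iff insert_ident)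
  then show "a = b" using \<open>a \<in> C\<close> by blast
qed

lemma nth_append_last:
  assumes "length xs = Suc j" "length ys = n"
  shows "(xs @ ys) ! (j + n) = last (last xs # ys)"
proof (cases n)
  case 0
  have "xs \<noteq> []" using assms by auto
  then show ?thesis using assms 0 by (simp add: last_conv_nth)
next
  case (Suc m)
  then have "(xs @ ys) ! (j + n) = ys ! m" using assms nth_append_length_plus[of xs ys m] by simp
  moreover have "ys \<noteq> []" using assms Suc by auto
  ultimately show ?thesis using assms Suc by (simp add: last_conv_nth)
qed

lemma map_pmf_of_set_eq_bernoulli_pmf:
  assumes "finite K" "K \<noteq> {}"
  shows "map_pmf P (pmf_of_set K) = bernoulli_pmf (real (card {a \<in> K. P a}) / real (card K))"
proof (rule pmf_eqI)
  fix b :: bool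
  have cardK: "card K > 0" using assms by (simp add: card_gt_0_iff)
  have "card {a \<in> K. P a} + card {a \<in> K. \<not> P a} = card K"
    using assms(1) by (subst card_Un_disjoint[symmetric]) (auto intro: arg_cong[where f = card])
  moreover have "pmf (map_pmf P (pmf_of_set K)) b = real (card {a \<in> K. P a = b}) / real (card K)"
    using assms by (simp add: pmf_map measure_pmf_of_set vimage_def Int_def conj_commute)
  ultimately show "pmf (map_pmf P (pmf_of_set K)) b
      = pmf (bernoulli_pmf (real (card {a \<in> K. P a}) / real (card K))) b"
    using cardK by (cases b) (auto simp: field_simps)
qed

lemma cond_pmf_bind_pmf:
  fixes p :: "'a pmf" and L :: "'a \<Rightarrow> 'b pmf"
  assumes E: "\<And>x y. x \<in> set_pmf p \<Longrightarrow> y \<in> set_pmf (L x) \<Longrightarrow> y \<in> E \<longleftrightarrow> x \<in> S"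
    and ne: "set_pmf p \<inter> S \<noteq> {}"
  shows "cond_pmf (bind_pmf p L) E = bind_pmf (cond_pmf p S) L"
proof (rule pmf_eqI)
  fix y
  have ind: "indicator E y * ennreal (pmf (L x) y) = ennreal (pmf (L x) y) * indicator S x"
    if "x \<in> set_pmf p" for x
    using E[OF that, of y] by (cases "y \<in> set_pmf (L x)") (auto simp: set_pmf_iff split: split_indicator)
  have "emeasure (bind_pmf p L) E = (\<integral>\<^sup>+x. emeasure (L x) E \<partial>p)" by simp
  also have "\<dots> = (\<integral>\<^sup>+x. indicator S x \<partial>p)"
  proof (rule nn_integral_cong_AE, rule AE_pmfI)
    fix x assume x: "x \<in> set_pmf p"
    have "emeasure (L x) E = emeasure (L x) (E \<inter> set_pmf (L x))" by (simp add: emeasure_Int_set_pmf)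
    also have "E \<inter> set_pmf (L x) = (if x \<in> S then set_pmf (L x) else {})" using E[OF x] by auto
    finally show "emeasure (L x) E = indicator S x"
      by (simp add: emeasure_pmf split: split_indicator)
  qed
  also have "\<dots> = emeasure p S" by simp
  finally have mE: "emeasure (bind_pmf p L) E = emeasure p S" .
  from ne obtain x0 where "x0 \<in> set_pmf p" "x0 \<in> S" by auto
  then obtain y0 where "y0 \<in> set_pmf (bind_pmf p L)" "y0 \<in> E"
    using E set_pmf_not_empty by fastforce
  then have neE: "set_pmf (bind_pmf p L) \<inter> E \<noteq> {}" by auto
  have "ennreal (pmf (cond_pmf (bind_pmf p L) E) y) = emeasure (cond_pmf (bind_pmf p L) E) {y}"
    by (simp add: emeasure_pmf_single)
  also have "\<dots> = emeasure (bind_pmf p L) (E \<inter> {y}) / emeasure p S"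
    unfolding cond_pmf.rep_eq[OF neE] mE[symmetric] by simp
  also have "\<dots> = (\<integral>\<^sup>+x. indicator E y * ennreal (pmf (L x) y) \<partial>p) / emeasure p S"
    by (cases "y \<in> E") (simp_all add: emeasure_pmf_single ennreal_pmf_bind)
  also have "\<dots> = (\<integral>\<^sup>+x. ennreal (pmf (L x) y) * indicator S x \<partial>p) / emeasure p S"
    using ind by (intro arg_cong[where f = "\<lambda>t. t / _"] nn_integral_cong_AE AE_pmfI)
  also have "\<dots> = ennreal (pmf (bind_pmf (cond_pmf p S) L) y)"
    by (simp add: ennreal_pmf_bind cond_pmf.rep_eq[OF ne] nn_integral_uniform_measure)
  finally show "pmf (cond_pmf (bind_pmf p L) E) y = pmf (bind_pmf (cond_pmf p S) L) y" by simp
qed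

lemma map_pmf_cond_pmf_first_stage:
  assumes two_stage: "map_pmf (\<lambda>\<omega>. (f \<omega>, g \<omega>)) p = bind_pmf q (\<lambda>x. map_pmf (Pair x) (L x))"
    and ne: "set_pmf p \<inter> {\<omega>. P (f \<omega>)} \<noteq> {}"
    and law: "\<And>x. x \<in> set_pmf q \<Longrightarrow> P x \<Longrightarrow> map_pmf h (L x) = R"
  shows "map_pmf (\<lambda>\<omega>. h (g \<omega>)) (cond_pmf p {\<omega>. P (f \<omega>)}) = R"
proof -
  have "(f \<omega>, g \<omega>) \<in> set_pmf (bind_pmf q (\<lambda>x. map_pmf (Pair x) (L x)))" if "\<omega> \<in> set_pmf p" for \<omega>
    using that unfolding two_stage[symmetric] by simp
  then have ne_q: "set_pmf q \<inter> {x. P x} \<noteq> {}" using ne by auto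
  have "map_pmf (\<lambda>\<omega>. h (g \<omega>)) (cond_pmf p {\<omega>. P (f \<omega>)})
      = map_pmf (h \<circ> snd) (cond_pmf (map_pmf (\<lambda>\<omega>. (f \<omega>, g \<omega>)) p) ({x. P x} \<times> UNIV))"
    using ne by (subst cond_map_pmf) (auto simp: map_pmf_comp vimage_def)
  also have "\<dots> = map_pmf (h \<circ> snd) (bind_pmf (cond_pmf q {x. P x}) (\<lambda>x. map_pmf (Pair x) (L x)))"
    unfolding two_stage using ne_q by (subst cond_pmf_bind_pmf) auto
  also have "\<dots> = bind_pmf (cond_pmf q {x. P x}) (\<lambda>x. map_pmf h (L x))"
    by (simp add: map_bind_pmf map_pmf_comp)
  also have "\<dots> = bind_pmf (cond_pmf q {x. P x}) (\<lambda>_. R)"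
    using law set_cond_pmf[OF ne_q] by (intro bind_pmf_cong) auto
  finally show ?thesis by simp
qed

definition extend_graph :: "graph \<Rightarrow> nat set \<Rightarrow> graph" where
  "extend_graph G C = (insert (card (fst G)) (fst G), snd G \<union> {{card (fst G), u} | u. u \<in> C})"

lemma ktree_step_eq_map_extend_graph:
  "ktree_step k G = map_pmf (extend_graph G) (pmf_of_set (kcliques k G))"
  unfolding ktree_step_def extend_graph_def by simp

definition wf_graph :: "graph \<Rightarrow> bool" where
  "wf_graph G \<longleftrightarrow> fst G = {0..<card (fst G)} \<and> (\<forall>e\<in>snd G. e \<subseteq> fst G)"

lemma wf_graph_finite: "wf_graph G \<Longrightarrow> finite (fst G)"
  unfolding wf_graph_def by (metis finite_atLeastLessThan)

lemma wf_graph_fresh_vertex: "wf_graph G \<Longrightarrow> card (fst G) \<notin> fst G"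
  unfolding wf_graph_def by (metis atLeastLessThan_iff less_irrefl)

lemma wf_graph_edge_subset: "wf_graph G \<Longrightarrow> e \<in> snd G \<Longrightarrow> e \<subseteq> fst G"
  unfolding wf_graph_def by blast

lemma wf_graph_degree_pos_imp_vertex:
  assumes "wf_graph G" "degree G x > 0"
  shows "x \<in> fst G"
proof -
  obtain y where "{x, y} \<in> snd G"
    using assms(2) unfolding degree_def neighbors_def by (auto simp: card_gt_0_iff)
  then show ?thesis using wf_graph_edge_subset[OF assms(1)] by blast
qed

lemma wf_graph_extend_graph:
  assumes "wf_graph G" "C \<subseteq> fst G"
  shows "wf_graph (extend_graph G C)"
proof -
  have "card (insert (card (fst G)) (fst G)) = Suc (card (fst G))"
    using assms(1) wf_graph_finite wf_graph_fresh_vertex by simp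
  moreover have "insert (card (fst G)) (fst G) = {0..<Suc (card (fst G))}"
    using assms(1) unfolding wf_graph_def by (metis atLeastLessThanSuc le0)
  moreover have "\<forall>e\<in>snd (extend_graph G C). e \<subseteq> fst (extend_graph G C)"
    using assms unfolding wf_graph_def extend_graph_def by auto
  ultimately show ?thesis
    unfolding wf_graph_def by (simp add: extend_graph_def)
qed

lemma finite_kcliques: "wf_graph G \<Longrightarrow> finite (kcliques k G)"
  by (rule finite_subset[of _ "Pow (fst G)"]) (auto simp: kcliques_def wf_graph_finite)

lemma kclique_avoiding_fresh_vertex:
  assumes "wf_graph G" "card (fst G) \<notin> S"
  shows "S \<in> kcliques k (extend_graph G C) \<longleftrightarrow> S \<in> kcliques k G"
  using assms wf_graph_fresh_vertex[OF assms(1)]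
  unfolding kcliques_def extend_graph_def by (auto simp: doubleton_eq_iff)

lemma kclique_containing_fresh_vertex:
  assumes G: "wf_graph G" and C: "C \<in> kcliques k G" and k: "k \<ge> 1"
    and S: "S \<in> kcliques k (extend_graph G C)" and v: "card (fst G) \<in> S"
  shows "\<exists>u\<in>C. S = insert (card (fst G)) (C - {u})"
proof -
  define v where "v = card (fst G)"
  define T where "T = S - {v}"
  have v_fresh: "v \<notin> fst G" and finV: "finite (fst G)"
    using wf_graph_fresh_vertex wf_graph_finite G v_def by auto
  have cardC: "card C = k" and finC: "finite C"
    using C finV unfolding kcliques_def by (auto dest: finite_subset)
  have "T \<subseteq> C"
  proof
    fix a assume "a \<in> T"
    then have "{v, a} \<in> snd G \<union> {{v, u} | u. u \<in> C}"
      using S v unfolding T_def v_def kcliques_def extend_graph_def by auto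
    moreover have "{v, a} \<notin> snd G" using wf_graph_edge_subset[OF G] v_fresh by blast
    ultimately show "a \<in> C" using \<open>a \<in> T\<close> by (auto simp: T_def doubleton_eq_iff)
  qed
  moreover have "card T = k - 1"
  proof -
    have "finite S" and "card S = k"
      using S finV unfolding kcliques_def extend_graph_def v_def by (auto dest: finite_subset)
    then show ?thesis using v unfolding T_def v_def by simp
  qed
  moreover have "\<not> C \<subseteq> T"
  proof
    assume "C \<subseteq> T"
    then have "card C \<le> card T" using card_mono[OF finite_subset[OF \<open>T \<subseteq> C\<close> finC]] by blast
    then show False using \<open>card T = k - 1\<close> cardC k by simp
  qed
  ultimately obtain u where u: "u \<in> C" "u \<notin> T" by blast
  have "T = C - {u}"
    using \<open>T \<subseteq> C\<close> \<open>card T = k - 1\<close> cardC finC u by (intro card_subset_eq) auto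
  then show ?thesis using u v unfolding T_def v_def by auto
qed

lemma insert_fresh_vertex_in_kcliques:
  assumes G: "wf_graph G" and C: "C \<in> kcliques k G" and k: "k \<ge> 1" and u: "u \<in> C"
  shows "insert (card (fst G)) (C - {u}) \<in> kcliques k (extend_graph G C)"
proof -
  define v where "v = card (fst G)"
  have CV: "C \<subseteq> fst G" and cardC: "card C = k"
    and edgeC: "\<And>a b. a \<in> C \<Longrightarrow> b \<in> C \<Longrightarrow> a \<noteq> b \<Longrightarrow> {a, b} \<in> snd G"
    using C unfolding kcliques_def by auto
  have finC: "finite C" using CV wf_graph_finite[OF G] finite_subset by blast
  have "v \<notin> C - {u}" using CV wf_graph_fresh_vertex[OF G] v_def by auto
  then have "card (insert v (C - {u})) = k" using cardC finC u k by (simp add: card_Diff_singleton)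
  moreover have "insert v (C - {u}) \<subseteq> insert v (fst G)" using CV by auto
  moreover have "{a, b} \<in> snd G \<union> {{v, u} | u. u \<in> C}"
    if "a \<in> insert v (C - {u})" "b \<in> insert v (C - {u})" "a \<noteq> b" for a b
    using that edgeC by (auto simp: insert_commute)
  ultimately show ?thesis unfolding kcliques_def extend_graph_def v_def by simp
qed

lemma kcliques_extend_graph:
  assumes G: "wf_graph G" and C: "C \<in> kcliques k G" and k: "k \<ge> 1"
  shows "kcliques k (extend_graph G C)
       = kcliques k G \<union> (\<lambda>u. insert (card (fst G)) (C - {u})) ` C"
proof (rule set_eqI)
  fix S
  show "S \<in> kcliques k (extend_graph G C) \<longleftrightarrow> S \<in> kcliques k G \<union> (\<lambda>u. insert (card (fst G)) (C - {u})) ` C"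
  proof (cases "card (fst G) \<in> S")
    case True
    moreover have "S \<notin> kcliques k G"
      using True wf_graph_fresh_vertex[OF G] unfolding kcliques_def by auto
    ultimately show ?thesis
      using kclique_containing_fresh_vertex[OF G C k] insert_fresh_vertex_in_kcliques[OF G C k] by auto
  next
    case False
    then show ?thesis using kclique_avoiding_fresh_vertex[OF G] by auto
  qed
qed

lemma card_kcliques_extend_graph:
  assumes G: "wf_graph G" and C: "C \<in> kcliques k G" and k: "k \<ge> 1"
  shows "card (kcliques k (extend_graph G C)) = card (kcliques k G) + k"
proof -
  define v where "v = card (fst G)"
  have CV: "C \<subseteq> fst G" and cardC: "card C = k" using C unfolding kcliques_def by auto
  have vC: "v \<notin> C" using CV wf_graph_fresh_vertex[OF G] v_def by auto
  have finC: "finite C" using CV wf_graph_finite[OF G] finite_subset by blast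
  have "kcliques k G \<inter> (\<lambda>u. insert v (C - {u})) ` C = {}"
    using wf_graph_fresh_vertex[OF G] unfolding kcliques_def v_def by auto
  then have "card (kcliques k (extend_graph G C))
      = card (kcliques k G) + card ((\<lambda>u. insert v (C - {u})) ` C)"
    unfolding kcliques_extend_graph[OF G C k, folded v_def]
    using finite_kcliques[OF G] finC by (intro card_Un_disjoint) auto
  also have "card ((\<lambda>u. insert v (C - {u})) ` C) = k"
    using card_image[OF inj_on_insert_Diff_singleton[OF vC]] cardC by simp
  finally show ?thesis .
qed

lemma nkcliques_at_extend_graph:
  assumes G: "wf_graph G" and C: "C \<in> kcliques k G" and k: "k \<ge> 1" and x: "x \<noteq> card (fst G)"
  shows "nkcliques_at k (extend_graph G C) x = nkcliques_at k G x + (if x \<in> C then k - 1 else 0)"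
proof -
  define v where "v = card (fst G)"
  define U where "U = {u \<in> C. x \<in> C \<and> u \<noteq> x}"
  have CV: "C \<subseteq> fst G" and cardC: "card C = k" using C unfolding kcliques_def by auto
  have vC: "v \<notin> C" using CV wf_graph_fresh_vertex[OF G] v_def by auto
  have finC: "finite C" using CV wf_graph_finite[OF G] finite_subset by blast
  have "{S \<in> kcliques k (extend_graph G C). x \<in> S}
      = {S \<in> kcliques k G. x \<in> S} \<union> (\<lambda>u. insert v (C - {u})) ` U"
    unfolding kcliques_extend_graph[OF G C k, folded v_def] U_def using x v_def by auto
  moreover have "{S \<in> kcliques k G. x \<in> S} \<inter> (\<lambda>u. insert v (C - {u})) ` U = {}"
    using wf_graph_fresh_vertex[OF G] unfolding kcliques_def v_def by auto
  ultimately have "nkcliques_at k (extend_graph G C) x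
      = nkcliques_at k G x + card ((\<lambda>u. insert v (C - {u})) ` U)"
    unfolding nkcliques_at_def using finite_kcliques[OF G] finC U_def
    by (simp add: card_Un_disjoint)
  also have "card ((\<lambda>u. insert v (C - {u})) ` U) = card U"
    by (rule card_image, rule inj_on_subset[OF inj_on_insert_Diff_singleton[OF vC]])
      (auto simp: U_def)
  also have "card U = (if x \<in> C then k - 1 else 0)"
  proof (cases "x \<in> C")
    case True
    then have "U = C - {x}" unfolding U_def by auto
    then show ?thesis using True cardC finC by simp
  qed (simp add: U_def)
  finally show ?thesis .
qed

lemma degree_extend_graph:
  assumes G: "wf_graph G" and CV: "C \<subseteq> fst G" and x: "x \<noteq> card (fst G)"
  shows "degree (extend_graph G C) x = degree G x + (if x \<in> C then 1 else 0)"
proof -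
  define v where "v = card (fst G)"
  have v_fresh: "v \<notin> fst G" using wf_graph_fresh_vertex[OF G] v_def by auto
  have "{x, v} \<notin> snd G" using wf_graph_edge_subset[OF G] v_fresh by blast
  then have "neighbors (extend_graph G C) x = neighbors G x \<union> (if x \<in> C then {v} else {})"
    using x v_fresh CV unfolding neighbors_def extend_graph_def v_def
    by (auto simp: doubleton_eq_iff)
  moreover have "finite (neighbors G x)"
    using wf_graph_finite[OF G] unfolding neighbors_def by auto
  moreover have "v \<notin> neighbors G x" using v_fresh unfolding neighbors_def by auto
  ultimately show ?thesis unfolding degree_def by auto
qed

lemma set_pmf_ktree_step:
  "wf_graph G \<Longrightarrow> kcliques k G \<noteq> {} \<Longrightarrow> set_pmf (ktree_step k G) = extend_graph G ` kcliques k G"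
  unfolding ktree_step_eq_map_extend_graph by (simp add: finite_kcliques)

lemma ktree_step_wf_graph:
  assumes "wf_graph G" "kcliques k G \<noteq> {}" "k \<ge> 1" "H \<in> set_pmf (ktree_step k G)"
  shows "wf_graph H \<and> card (kcliques k H) = card (kcliques k G) + k \<and> fst G \<subseteq> fst H"
proof -
  obtain C where C: "C \<in> kcliques k G" and H: "H = extend_graph G C"
    using assms set_pmf_ktree_step by blast
  then have "C \<subseteq> fst G" unfolding kcliques_def by auto
  then show ?thesis
    using H wf_graph_extend_graph card_kcliques_extend_graph[OF assms(1) C assms(3)] assms(1)
    unfolding extend_graph_def by auto
qed

lemma ktree_step_degree_balance:
  assumes G: "wf_graph G" "kcliques k G \<noteq> {}" and k: "k \<ge> 1" and x: "x \<in> fst G"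
    and H: "H \<in> set_pmf (ktree_step k G)"
  shows "(k - 1) * degree H x + nkcliques_at k G x = (k - 1) * degree G x + nkcliques_at k H x"
proof -
  obtain C where C: "C \<in> kcliques k G" and H: "H = extend_graph G C"
    using G H set_pmf_ktree_step by blast
  have CV: "C \<subseteq> fst G" using C unfolding kcliques_def by auto
  have xv: "x \<noteq> card (fst G)" using x wf_graph_fresh_vertex[OF G(1)] by auto
  show ?thesis
    unfolding H degree_extend_graph[OF G(1) CV xv] nkcliques_at_extend_graph[OF G(1) C k xv]
    by (cases "x \<in> C") (simp_all add: algebra_simps)
qed

definition clique_urn :: "nat \<Rightarrow> nat \<Rightarrow> graph \<Rightarrow> nat \<times> nat" where
  "clique_urn k x G = (nkcliques_at k G x, card (kcliques k G) - nkcliques_at k G x)"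

lemma map_ktree_step_clique_urn:
  assumes G: "wf_graph G" "kcliques k G \<noteq> {}" and k: "k \<ge> 1" and x: "x \<noteq> card (fst G)"
  shows "map_pmf (clique_urn k x) (ktree_step k G) = urn_step k 0 1 (k - 1) (clique_urn k x G)"
proof -
  define W where "W = nkcliques_at k G x"
  define T where "T = card (kcliques k G)"
  have fin: "finite (kcliques k G)" using finite_kcliques G by auto
  have WT: "W \<le> T" unfolding W_def T_def nkcliques_at_def by (rule card_mono[OF fin]) auto
  have T0: "T > 0" using fin G T_def by (simp add: card_gt_0_iff)
  define draw where
    "draw = (\<lambda>white. if white then (W + (k - 1), (T - W) + 1) else (W + 0, (T - W) + k))"
  have "map_pmf (clique_urn k x) (ktree_step k G) = map_pmf (\<lambda>C. draw (x \<in> C)) (pmf_of_set (kcliques k G))"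
    unfolding ktree_step_eq_map_extend_graph map_pmf_comp
  proof (rule map_pmf_cong[OF refl])
    fix C assume "C \<in> set_pmf (pmf_of_set (kcliques k G))"
    then have C: "C \<in> kcliques k G" using fin G by simp
    show "clique_urn k x (extend_graph G C) = draw (x \<in> C)"
      unfolding clique_urn_def draw_def nkcliques_at_extend_graph[OF G(1) C k x]
        card_kcliques_extend_graph[OF G(1) C k] W_def[symmetric] T_def[symmetric]
      using WT k by auto
  qed
  also have "\<dots> = map_pmf draw (bernoulli_pmf (real W / real T))"
    unfolding map_pmf_comp[symmetric, of draw "\<lambda>C. x \<in> C"] map_pmf_of_set_eq_bernoulli_pmf[OF fin G(2)]
      W_def T_def nkcliques_at_def by simp
  also have "\<dots> = urn_step k 0 1 (k - 1) (clique_urn k x G)"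
    unfolding urn_step_def clique_urn_def W_def[symmetric] T_def[symmetric] draw_def
    using WT T0 by (auto simp: add.commute)
  finally show ?thesis .
qed

lemma wf_graph_ktree_init: "wf_graph (ktree_init k)"
  unfolding wf_graph_def ktree_init_def by auto

lemma kcliques_ktree_init: "kcliques k (ktree_init k) = {{0..<k}}"
proof -
  have "S = {0..<k}" if "S \<in> kcliques k (ktree_init k)" for S
    using that card_subset_eq[of "{0..<k}" S] unfolding kcliques_def ktree_init_def by auto
  moreover have "{0..<k} \<in> kcliques k (ktree_init k)"
    unfolding kcliques_def ktree_init_def by auto blast
  ultimately show ?thesis by blast
qed

lemma length_ktree_traj: "gs \<in> set_pmf (ktree_traj k t) \<Longrightarrow> length gs = Suc t"
  by (induction t arbitrary: gs) auto

lemma set_pmf_ktree_traj: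
  assumes "k \<ge> 1" "gs \<in> set_pmf (ktree_traj k t)"
  shows "wf_graph (last gs) \<and> card (kcliques k (last gs)) = k * t + 1"
  using assms(2)
proof (induction t arbitrary: gs)
  case 0
  then show ?case by (simp add: wf_graph_ktree_init kcliques_ktree_init)
next
  case (Suc t)
  then obtain gs' H where gs': "gs' \<in> set_pmf (ktree_traj k t)"
    and H: "H \<in> set_pmf (ktree_step k (last gs'))" and gs: "gs = gs' @ [H]" by auto
  have "kcliques k (last gs') \<noteq> {}" using Suc.IH[OF gs'] by auto
  then show ?case using Suc.IH[OF gs'] ktree_step_wf_graph[OF _ _ assms(1) H] gs by simp
qed

text \<open>The next n graphs of the process started from G (the list excludes G itself).\<close>
fun ktree_future :: "nat \<Rightarrow> nat \<Rightarrow> graph \<Rightarrow> graph list pmf" where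
  "ktree_future k 0 G = return_pmf []"
| "ktree_future k (Suc n) G =
     bind_pmf (ktree_future k n G) (\<lambda>hs. map_pmf (\<lambda>H. hs @ [H]) (ktree_step k (last (G # hs))))"

lemma length_ktree_future: "hs \<in> set_pmf (ktree_future k n G) \<Longrightarrow> length hs = n"
  by (induction n arbitrary: hs) auto

lemma ktree_future_invariant:
  assumes "P G" and step: "\<And>G H. P G \<Longrightarrow> H \<in> set_pmf (ktree_step k G) \<Longrightarrow> P H"
    and "hs \<in> set_pmf (ktree_future k n G)"
  shows "P (last (G # hs))"
  using assms(3)
proof (induction n arbitrary: hs)
  case (Suc n)
  then obtain hs' H where hs': "hs' \<in> set_pmf (ktree_future k n G)"
    and H: "H \<in> set_pmf (ktree_step k (last (G # hs')))" and "hs = hs' @ [H]" by auto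
  then show ?case using step[OF Suc.IH[OF hs'] H] by simp
qed (simp add: assms(1))

lemma ktree_traj_add:
  "ktree_traj k (j + n) = bind_pmf (ktree_traj k j) (\<lambda>gs. map_pmf ((@) gs) (ktree_future k n (last gs)))"
proof (induction n)
  case 0
  then show ?case by (simp add: bind_return_pmf')
next
  case (Suc n)
  have nonempty: "gs \<noteq> []" if "gs \<in> set_pmf (ktree_traj k j)" for gs
    using length_ktree_traj[OF that] by auto
  have "ktree_traj k (j + Suc n) = bind_pmf (ktree_traj k j) (\<lambda>gs. bind_pmf (ktree_future k n (last gs))
        (\<lambda>hs. map_pmf (\<lambda>H. gs @ hs @ [H]) (ktree_step k (last (gs @ hs)))))"
    by (simp add: Suc bind_assoc_pmf bind_map_pmf)
  also have "\<dots> = bind_pmf (ktree_traj k j) (\<lambda>gs. map_pmf ((@) gs) (ktree_future k (Suc n) (last gs)))"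
    using nonempty by (intro bind_pmf_cong) (simp_all add: map_bind_pmf map_pmf_comp last_append)
  finally show ?case .
qed

lemma ktree_traj_nth_pair:
  "map_pmf (\<lambda>gs. (gs ! j, gs ! (j + n))) (ktree_traj k (j + n))
     = bind_pmf (map_pmf last (ktree_traj k j))
         (\<lambda>G. map_pmf (Pair G) (map_pmf (\<lambda>hs. last (G # hs)) (ktree_future k n G)))"
proof -
  have "(gs @ hs) ! j = last gs" "(gs @ hs) ! (j + n) = last (last gs # hs)"
    if "gs \<in> set_pmf (ktree_traj k j)" "hs \<in> set_pmf (ktree_future k n (last gs))" for gs hs
    using nth_append_last[of gs j "[]"] nth_append_last[of gs j hs]
      length_ktree_traj[OF that(1)] length_ktree_future[OF that(2)]
    by (simp_all add: nth_append)
  then show ?thesis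
    unfolding ktree_traj_add by (simp add: map_bind_pmf bind_map_pmf map_pmf_comp cong: bind_pmf_cong map_pmf_cong)
qed

lemma ktree_future_wf_graph:
  assumes k: "k \<ge> 1" and G: "wf_graph G" "kcliques k G \<noteq> {}"
    and hs: "hs \<in> set_pmf (ktree_future k n G)"
  shows "wf_graph (last (G # hs)) \<and> kcliques k (last (G # hs)) \<noteq> {} \<and> fst G \<subseteq> fst (last (G # hs))"
proof (rule ktree_future_invariant[OF _ _ hs])
  fix H' H
  assume H': "wf_graph H' \<and> kcliques k H' \<noteq> {} \<and> fst G \<subseteq> fst H'"
    and H: "H \<in> set_pmf (ktree_step k H')"
  have "wf_graph H" "card (kcliques k H) = card (kcliques k H') + k" "fst H' \<subseteq> fst H"
    using ktree_step_wf_graph[OF _ _ k H] H' by auto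
  then show "wf_graph H \<and> kcliques k H \<noteq> {} \<and> fst G \<subseteq> fst H" using H' k by auto
qed (use G in simp)

lemma ktree_future_degree_balance:
  assumes k: "k \<ge> 1" and G: "wf_graph G" "kcliques k G \<noteq> {}" and x: "x \<in> fst G"
    and hs: "hs \<in> set_pmf (ktree_future k n G)"
  shows "(k - 1) * degree (last (G # hs)) x + nkcliques_at k G x
       = (k - 1) * degree G x + nkcliques_at k (last (G # hs)) x"
proof -
  let ?P = "\<lambda>H. wf_graph H \<and> kcliques k H \<noteq> {} \<and> x \<in> fst H \<and>
    (k - 1) * degree H x + nkcliques_at k G x = (k - 1) * degree G x + nkcliques_at k H x"
  have "?P (last (G # hs))"
  proof (rule ktree_future_invariant[OF _ _ hs])
    fix H' H assume H': "?P H'" and H: "H \<in> set_pmf (ktree_step k H')"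
    have "wf_graph H" "card (kcliques k H) = card (kcliques k H') + k" "fst H' \<subseteq> fst H"
      using ktree_step_wf_graph[OF _ _ k H] H' by auto
    moreover have "(k - 1) * degree H x + nkcliques_at k H' x = (k - 1) * degree H' x + nkcliques_at k H x"
      using ktree_step_degree_balance[OF _ _ k _ H] H' by blast
    ultimately show "?P H" using H' k by auto
  qed (use G x in simp)
  then show ?thesis by blast
qed

lemma ktree_future_clique_urn:
  assumes k: "k \<ge> 1" and G: "wf_graph G" "kcliques k G \<noteq> {}" and x: "x \<in> fst G"
  shows "map_pmf (\<lambda>hs. clique_urn k x (last (G # hs))) (ktree_future k n G)
       = urn_state (fst (clique_urn k x G)) (snd (clique_urn k x G)) k 0 1 (k - 1) n"
proof (induction n)
  case (Suc n)
  have step: "map_pmf (clique_urn k x) (ktree_step k (last (G # hs)))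
      = urn_step k 0 1 (k - 1) (clique_urn k x (last (G # hs)))"
    if hs: "hs \<in> set_pmf (ktree_future k n G)" for hs
  proof (rule map_ktree_step_clique_urn[OF _ _ k])
    show "wf_graph (last (G # hs))" "kcliques k (last (G # hs)) \<noteq> {}"
      using ktree_future_wf_graph[OF k G hs] by auto
    then show "x \<noteq> card (fst (last (G # hs)))"
      using ktree_future_wf_graph[OF k G hs] x wf_graph_fresh_vertex by blast
  qed
  have "map_pmf (\<lambda>hs. clique_urn k x (last (G # hs))) (ktree_future k (Suc n) G)
      = bind_pmf (ktree_future k n G) (\<lambda>hs. map_pmf (clique_urn k x) (ktree_step k (last (G # hs))))"
    by (simp add: map_bind_pmf map_pmf_comp)
  also have "\<dots> = bind_pmf (ktree_future k n G) (\<lambda>hs. urn_step k 0 1 (k - 1) (clique_urn k x (last (G # hs))))"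
    using step by (rule bind_pmf_cong[OF refl])
  also have "\<dots> = bind_pmf (map_pmf (\<lambda>hs. clique_urn k x (last (G # hs))) (ktree_future k n G))
      (urn_step k 0 1 (k - 1))"
    by (simp add: bind_map_pmf del: last.simps)
  finally show ?case by (simp only: Suc urn_state.simps)
qed simp

lemma degree_ktree_future:
  assumes k: "k \<ge> 2" and G: "wf_graph G" "kcliques k G \<noteq> {}" and x: "x \<in> fst G"
  shows "map_pmf (\<lambda>hs. real (degree (last (G # hs)) x)) (ktree_future k n G)
       = map_pmf (\<lambda>w. real (degree G x) + (real w - real (nkcliques_at k G x)) / (real k - 1))
           (Urn (nkcliques_at k G x) (card (kcliques k G) - nkcliques_at k G x) k 0 1 (k - 1) n)"
proof -
  have k1: "k \<ge> 1" using k by simp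
  have "real (degree (last (G # hs)) x)
      = real (degree G x) + (real (fst (clique_urn k x (last (G # hs)))) - real (nkcliques_at k G x)) / (real k - 1)"
    if hs: "hs \<in> set_pmf (ktree_future k n G)" for hs
  proof -
    have "real (k - 1) * real (degree (last (G # hs)) x) + real (nkcliques_at k G x)
        = real (k - 1) * real (degree G x) + real (nkcliques_at k (last (G # hs)) x)"
      using ktree_future_degree_balance[OF k1 G x hs] by (metis of_nat_add of_nat_mult)
    moreover have "real (k - 1) = real k - 1" using k by (simp add: of_nat_diff)
    ultimately show ?thesis using k by (simp add: clique_urn_def field_simps)
  qed
  then have "map_pmf (\<lambda>hs. real (degree (last (G # hs)) x)) (ktree_future k n G)
      = map_pmf (\<lambda>w. real (degree G x) + (real w - real (nkcliques_at k G x)) / (real k - 1))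
          (map_pmf fst (map_pmf (\<lambda>hs. clique_urn k x (last (G # hs))) (ktree_future k n G)))"
    by (simp add: map_pmf_comp cong: map_pmf_cong)
  then show ?thesis
    unfolding ktree_future_clique_urn[OF k1 G x] Urn_def by (simp add: clique_urn_def)
qed

theorem proposition3:
  fixes k j n x A B :: nat
  assumes "k \<ge> 2"
    and "A > 0"
    and "\<exists>gs \<in> set_pmf (ktree_traj k (n + j)).
           degree (gs ! j) x = A \<and> nkcliques_at k (gs ! j) x = B"
  shows "map_pmf (\<lambda>gs. real (degree (gs ! (n + j)) x))
           (cond_pmf (ktree_traj k (n + j))
              {gs. degree (gs ! j) x = A \<and> nkcliques_at k (gs ! j) x = B})
       = map_pmf (\<lambda>w. real A + (real w - real B) / (real k - 1))
           (Urn B (k * j + 1 - B) k 0 1 (k - 1) n)"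
proof (rule map_pmf_cond_pmf_first_stage[where f = "\<lambda>gs. gs ! j" and g = "\<lambda>gs. gs ! (n + j)"
      and h = "\<lambda>H. real (degree H x)" and P = "\<lambda>G. degree G x = A \<and> nkcliques_at k G x = B"])
  show "map_pmf (\<lambda>gs. (gs ! j, gs ! (n + j))) (ktree_traj k (n + j))
      = bind_pmf (map_pmf last (ktree_traj k j))
          (\<lambda>G. map_pmf (Pair G) (map_pmf (\<lambda>hs. last (G # hs)) (ktree_future k n G)))"
    using ktree_traj_nth_pair[of j n k] by (simp add: add.commute)
  show "set_pmf (ktree_traj k (n + j)) \<inter> {gs. degree (gs ! j) x = A \<and> nkcliques_at k (gs ! j) x = B} \<noteq> {}"
    using assms(3) by blast
  fix G assume G: "G \<in> set_pmf (map_pmf last (ktree_traj k j))" and AB: "degree G x = A \<and> nkcliques_at k G x = B"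
  have wf: "wf_graph G" and card: "card (kcliques k G) = k * j + 1"
    using G set_pmf_ktree_traj[of k] assms(1) by auto
  then have "kcliques k G \<noteq> {}" by auto
  moreover have "x \<in> fst G" using wf_graph_degree_pos_imp_vertex[OF wf] AB assms(2) by blast
  ultimately show "map_pmf (\<lambda>H. real (degree H x)) (map_pmf (\<lambda>hs. last (G # hs)) (ktree_future k n G))
      = map_pmf (\<lambda>w. real A + (real w - real B) / (real k - 1)) (Urn B (k * j + 1 - B) k 0 1 (k - 1) n)"
    using degree_ktree_future[OF assms(1) wf] card AB by (simp add: map_pmf_comp)
qed

end
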